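(* Let $(E,C)$ be a configuration structure and let $P$ be a set of properties from the list: rooted; closed under bounded unions; closed under nonempty intersections; closed under bounded nonempty intersections; finite conflict; binary conflict; closed under finitely consistent unions; closed under pairwise consistent unions; closed under finitely consistent nonempty intersections; closed under pairwise consistent nonempty intersections. Suppose $P$ is a package, i.e.: $P$ contains "closed under finitely consistent unions" iff it contains both "closed under bounded unions" and "finite conflict"; $P$ contains "closed under pairwise consistent unions" iff it contains both "closed under bounded unions" and "binary conflict"; $P$ contains "closed under finitely consistent nonempty intersections" iff it contains both "closed under bounded nonempty intersections" and "finite conflict"; $P$ contains "closed under pairwise consistent nonempty intersections" iff it contains both "closed under bounded nonempty intersections" and "binary conflict". Let $P'$ be the set of event-structure properties corresponding to $P$ under: rooted $\mapsto$ rooted; bounded unions $\mapsto$ singular; nonempty intersections $\mapsto$ conjunctive; bounded nonempty intersections $\mapsto$ locally conjunctive; finite conflict $\mapsto$ finite conflict; binary conflict $\mapsto$ binary conflict; finitely consistent unions $\mapsto$ singular and finite conflict; pairwise consistent unions $\mapsto$ singular and binary conflict; finitely consistent nonempty intersections $\mapsto$ locally conjunctive and finite conflict; pairwise consistent nonempty intersections $\mapsto$ locally conjunctive and binary conflict. Then $(E,C)$ has all properties in $P$ if and only if there is an event structure $(E,\vdash)$ with all properties in $P'$ whose set of left-closed configurations is $C$; moreover, in this case such an event structure can be chosen to be pure.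
   Context: An event structure is $(E,\vdash)$ with $\vdash\subseteq\mathcal{P}(E)\times\mathcal{P}(E)$; its left-closed configurations are the $X\subseteq E$ such that every $Y\subseteq X$ has some $Z\subseteq X$ with $Z\vdash Y$. It is pure if $X\vdash Y$ implies $X\cap Y=\emptyset$; rooted if $\emptyset\vdash\emptyset$; singular if $X\vdash Y$ implies $X=\emptyset$ or $|Y|=1$; conjunctive if $X_i\vdash Y$ ($i\in I\ne\emptyset$) implies $\bigcap_iX_i\vdash Y$; locally conjunctive if $X_i\vdash Y$ ($i\in I\neq\emptyset$) together with $\mathrm{Con}(\bigcup_iX_i\cup Y)$ implies $\bigcap_iX_i\vdash Y$, where $\mathrm{Con}(X)$ means every $Y\subseteq X$ has some $Z\subseteq E$ with $Z\vdash Y$; finite conflict if $\emptyset\vdash X$ for all infinite $X$; binary conflict if $\emptyset\vdash X$ for all $X$ with $|X|>2$. A configuration structure $(E,C)$, $C\subseteq\mathcal{P}(E)$, is rooted if $\emptyset\in C$. $X$ is consistent if $X\subseteq z$ for some $z\in C$; finitely (pairwise) consistent if every finite subset (every subset of size $\le 2$) is consistent. Closure properties: bounded unions: $A\subseteq C$, $\bigcup A$ consistent $\Rightarrow\bigcup A\in C$; nonempty intersections: $\emptyset\neq A\subseteq C\Rightarrow\bigcap A\in C$; bounded nonempty intersections: additionally requiring $\bigcup A$ consistent; finitely/pairwise consistent unions (resp. nonempty intersections): $A\subseteq C$ (resp. $\emptyset\ne A\subseteq C$) with $\bigcup A$ finitely/pairwise consistent implies $\bigcup A\in C$ (resp. $\bigcap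 A\in C$). $(E,C)$ has finite conflict if every $X\subseteq E$ such that each finite $Y\subseteq X$ satisfies $Y\subseteq z\subseteq X$ for some $z\in C$ belongs to $C$; binary conflict: the same with $|Y|\le2$ instead of finite $Y$. *)

theory Defs
  imports Main
begin

text \<open>An event structure (E, ent) with ent a relation on subsets of E, written as a
  binary predicate: ent X Y means X enables Y.\<close>

definition event_structure :: "'a set \<Rightarrow> ('a set \<Rightarrow> 'a set \<Rightarrow> bool) \<Rightarrow> bool" where
  "event_structure E ent \<longleftrightarrow> (\<forall>X Y. ent X Y \<longrightarrow> X \<subseteq> E \<and> Y \<subseteq> E)"

definition left_closed_configs :: "'a set \<Rightarrow> ('a set \<Rightarrow> 'a set \<Rightarrow> bool) \<Rightarrow> 'a set set" where
  "left_closed_configs E ent = {X. X \<subseteq> E \<and> (\<forall>Y. Y \<subseteq> X \<longrightarrow> (\<exists>Z. Z \<subseteq> X \<and> ent Z Y))}"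

definition es_Con :: "'a set \<Rightarrow> ('a set \<Rightarrow> 'a set \<Rightarrow> bool) \<Rightarrow> 'a set \<Rightarrow> bool" where
  "es_Con E ent X \<longleftrightarrow> (\<forall>Y. Y \<subseteq> X \<longrightarrow> (\<exists>Z. Z \<subseteq> E \<and> ent Z Y))"

definition es_pure :: "'a set \<Rightarrow> ('a set \<Rightarrow> 'a set \<Rightarrow> bool) \<Rightarrow> bool" where
  "es_pure E ent \<longleftrightarrow> (\<forall>X Y. ent X Y \<longrightarrow> X \<inter> Y = {})"

definition es_rooted :: "'a set \<Rightarrow> ('a set \<Rightarrow> 'a set \<Rightarrow> bool) \<Rightarrow> bool" where
  "es_rooted E ent \<longleftrightarrow> ent {} {}"

definition es_singular :: "'a set \<Rightarrow> ('a set \<Rightarrow> 'a set \<Rightarrow> bool) \<Rightarrow> bool" where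
  "es_singular E ent \<longleftrightarrow> (\<forall>X Y. ent X Y \<longrightarrow> X = {} \<or> card Y = 1)"

text \<open>A nonempty family (X_i) is represented by the nonempty set of its members.\<close>
definition es_conjunctive :: "'a set \<Rightarrow> ('a set \<Rightarrow> 'a set \<Rightarrow> bool) \<Rightarrow> bool" where
  "es_conjunctive E ent \<longleftrightarrow>
     (\<forall>XS Y. XS \<noteq> {} \<and> (\<forall>X\<in>XS. ent X Y) \<longrightarrow> ent (\<Inter>XS) Y)"

definition es_locally_conjunctive :: "'a set \<Rightarrow> ('a set \<Rightarrow> 'a set \<Rightarrow> bool) \<Rightarrow> bool" where
  "es_locally_conjunctive E ent \<longleftrightarrow>
     (\<forall>XS Y. XS \<noteq> {} \<and> (\<forall>X\<in>XS. ent X Y) \<and> es_Con E ent (\<Union>XS \<union> Y)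
        \<longrightarrow> ent (\<Inter>XS) Y)"

definition es_finite_conflict :: "'a set \<Rightarrow> ('a set \<Rightarrow> 'a set \<Rightarrow> bool) \<Rightarrow> bool" where
  "es_finite_conflict E ent \<longleftrightarrow> (\<forall>X. X \<subseteq> E \<and> infinite X \<longrightarrow> ent {} X)"

definition es_binary_conflict :: "'a set \<Rightarrow> ('a set \<Rightarrow> 'a set \<Rightarrow> bool) \<Rightarrow> bool" where
  "es_binary_conflict E ent \<longleftrightarrow>
     (\<forall>X. X \<subseteq> E \<and> (infinite X \<or> card X > 2) \<longrightarrow> ent {} X)"

definition config_structure :: "'a set \<Rightarrow> 'a set set \<Rightarrow> bool" where
  "config_structure E C \<longleftrightarrow> C \<subseteq> Pow E"

definition cs_consistent :: "'a set set \<Rightarrow> 'a set \<Rightarrow> bool" where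
  "cs_consistent C X \<longleftrightarrow> (\<exists>z\<in>C. X \<subseteq> z)"

definition cs_fin_consistent :: "'a set set \<Rightarrow> 'a set \<Rightarrow> bool" where
  "cs_fin_consistent C X \<longleftrightarrow> (\<forall>Y. Y \<subseteq> X \<and> finite Y \<longrightarrow> cs_consistent C Y)"

definition cs_pw_consistent :: "'a set set \<Rightarrow> 'a set \<Rightarrow> bool" where
  "cs_pw_consistent C X \<longleftrightarrow> (\<forall>Y. Y \<subseteq> X \<and> finite Y \<and> card Y \<le> 2 \<longrightarrow> cs_consistent C Y)"

definition cs_rooted :: "'a set \<Rightarrow> 'a set set \<Rightarrow> bool" where
  "cs_rooted E C \<longleftrightarrow> {} \<in> C"

definition cs_bounded_unions :: "'a set \<Rightarrow> 'a set set \<Rightarrow> bool" where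
  "cs_bounded_unions E C \<longleftrightarrow> (\<forall>A. A \<subseteq> C \<and> cs_consistent C (\<Union>A) \<longrightarrow> \<Union>A \<in> C)"

definition cs_ne_inters :: "'a set \<Rightarrow> 'a set set \<Rightarrow> bool" where
  "cs_ne_inters E C \<longleftrightarrow> (\<forall>A. A \<noteq> {} \<and> A \<subseteq> C \<longrightarrow> \<Inter>A \<in> C)"

definition cs_bounded_ne_inters :: "'a set \<Rightarrow> 'a set set \<Rightarrow> bool" where
  "cs_bounded_ne_inters E C \<longleftrightarrow>
     (\<forall>A. A \<noteq> {} \<and> A \<subseteq> C \<and> cs_consistent C (\<Union>A) \<longrightarrow> \<Inter>A \<in> C)"

definition cs_fc_unions :: "'a set \<Rightarrow> 'a set set \<Rightarrow> bool" where
  "cs_fc_unions E C \<longleftrightarrow> (\<forall>A. A \<subseteq> C \<and> cs_fin_consistent C (\<Union>A) \<longrightarrow> \<Union>A \<in> C)"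

definition cs_pc_unions :: "'a set \<Rightarrow> 'a set set \<Rightarrow> bool" where
  "cs_pc_unions E C \<longleftrightarrow> (\<forall>A. A \<subseteq> C \<and> cs_pw_consistent C (\<Union>A) \<longrightarrow> \<Union>A \<in> C)"

definition cs_fc_ne_inters :: "'a set \<Rightarrow> 'a set set \<Rightarrow> bool" where
  "cs_fc_ne_inters E C \<longleftrightarrow>
     (\<forall>A. A \<noteq> {} \<and> A \<subseteq> C \<and> cs_fin_consistent C (\<Union>A) \<longrightarrow> \<Inter>A \<in> C)"

definition cs_pc_ne_inters :: "'a set \<Rightarrow> 'a set set \<Rightarrow> bool" where
  "cs_pc_ne_inters E C \<longleftrightarrow>
     (\<forall>A. A \<noteq> {} \<and> A \<subseteq> C \<and> cs_pw_consistent C (\<Union>A) \<longrightarrow> \<Inter>A \<in> C)"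

definition cs_finite_conflict :: "'a set \<Rightarrow> 'a set set \<Rightarrow> bool" where
  "cs_finite_conflict E C \<longleftrightarrow>
     (\<forall>X. X \<subseteq> E \<and> (\<forall>Y. Y \<subseteq> X \<and> finite Y \<longrightarrow> (\<exists>z\<in>C. Y \<subseteq> z \<and> z \<subseteq> X)) \<longrightarrow> X \<in> C)"

definition cs_binary_conflict :: "'a set \<Rightarrow> 'a set set \<Rightarrow> bool" where
  "cs_binary_conflict E C \<longleftrightarrow>
     (\<forall>X. X \<subseteq> E \<and> (\<forall>Y. Y \<subseteq> X \<and> finite Y \<and> card Y \<le> 2 \<longrightarrow> (\<exists>z\<in>C. Y \<subseteq> z \<and> z \<subseteq> X))
        \<longrightarrow> X \<in> C)"

datatype cprop = CRooted | BoundedUnions | NEInters | BoundedNEInters | CFiniteConflict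
  | CBinaryConflict | FCUnions | PCUnions | FCNEInters | PCNEInters

datatype eprop = ERooted | Singular | Conjunctive | LocallyConjunctive | EFiniteConflict
  | EBinaryConflict

fun cholds :: "cprop \<Rightarrow> 'a set \<Rightarrow> 'a set set \<Rightarrow> bool" where
  "cholds CRooted E C = cs_rooted E C"
| "cholds BoundedUnions E C = cs_bounded_unions E C"
| "cholds NEInters E C = cs_ne_inters E C"
| "cholds BoundedNEInters E C = cs_bounded_ne_inters E C"
| "cholds CFiniteConflict E C = cs_finite_conflict E C"
| "cholds CBinaryConflict E C = cs_binary_conflict E C"
| "cholds FCUnions E C = cs_fc_unions E C"
| "cholds PCUnions E C = cs_pc_unions E C"
| "cholds FCNEInters E C = cs_fc_ne_inters E C"
| "cholds PCNEInters E C = cs_pc_ne_inters E C"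

fun eholds :: "eprop \<Rightarrow> 'a set \<Rightarrow> ('a set \<Rightarrow> 'a set \<Rightarrow> bool) \<Rightarrow> bool" where
  "eholds ERooted E ent = es_rooted E ent"
| "eholds Singular E ent = es_singular E ent"
| "eholds Conjunctive E ent = es_conjunctive E ent"
| "eholds LocallyConjunctive E ent = es_locally_conjunctive E ent"
| "eholds EFiniteConflict E ent = es_finite_conflict E ent"
| "eholds EBinaryConflict E ent = es_binary_conflict E ent"

definition package :: "cprop set \<Rightarrow> bool" where
  "package P \<longleftrightarrow>
     (FCUnions \<in> P \<longleftrightarrow> BoundedUnions \<in> P \<and> CFiniteConflict \<in> P) \<and>
     (PCUnions \<in> P \<longleftrightarrow> BoundedUnions \<in> P \<and> CBinaryConflict \<in> P) \<and>
     (FCNEInters \<in> P \<longleftrightarrow> BoundedNEInters \<in> P \<and> CFiniteConflict \<in> P) \<and>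
     (PCNEInters \<in> P \<longleftrightarrow> BoundedNEInters \<in> P \<and> CBinaryConflict \<in> P)"

fun translate :: "cprop \<Rightarrow> eprop set" where
  "translate CRooted = {ERooted}"
| "translate BoundedUnions = {Singular}"
| "translate NEInters = {Conjunctive}"
| "translate BoundedNEInters = {LocallyConjunctive}"
| "translate CFiniteConflict = {EFiniteConflict}"
| "translate CBinaryConflict = {EBinaryConflict}"
| "translate FCUnions = {Singular, EFiniteConflict}"
| "translate PCUnions = {Singular, EBinaryConflict}"
| "translate FCNEInters = {LocallyConjunctive, EFiniteConflict}"
| "translate PCNEInters = {LocallyConjunctive, EBinaryConflict}"

definition translate_set :: "cprop set \<Rightarrow> eprop set" where
  "translate_set P = (\<Union>p\<in>P. translate p)"

end

theory Submission
  imports Defs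
begin

text \<open>
  The conflict and boundedness conditions differ only in which subsets of a set are tested: all
  of them (boundedness), the finite ones (finite conflict) or those of at most two events (binary
  conflict). Everything is therefore proved once for an arbitrary class \<open>S\<close> of tested sets.

  Left-closed configurations inherit closure under unions from singularity and closure under
  nonempty intersections from (local) conjunctivity, because the enablings of \<open>Y\<close> found inside the
  members of a family can be combined. Conversely, \<open>C\<close> is the set of left-closed configurations
  of the pure enabling \<open>Z \<turnstile> Y \<longleftrightarrow> Z \<inter> Y = {} \<and> Z \<union> Y \<in> C\<close> (plus \<open>{} \<turnstile> Y\<close> for untested \<open>Y\<close>), and,
  when \<open>C\<close> is closed under bounded unions, also of its singular restriction to single events,
  since then every configuration is the union of the configurations below it.
\<close>

section \<open>Conditions relative to a class of tested sets\<close>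

definition at_most_two :: "'a set \<Rightarrow> bool" where
  "at_most_two Y \<longleftrightarrow> finite Y \<and> card Y \<le> 2"

definition cs_consistent_wrt :: "('a set \<Rightarrow> bool) \<Rightarrow> 'a set set \<Rightarrow> 'a set \<Rightarrow> bool" where
  "cs_consistent_wrt S C X \<longleftrightarrow> (\<forall>Y. Y \<subseteq> X \<and> S Y \<longrightarrow> cs_consistent C Y)"

definition cs_unions_wrt :: "('a set \<Rightarrow> bool) \<Rightarrow> 'a set set \<Rightarrow> bool" where
  "cs_unions_wrt S C \<longleftrightarrow> (\<forall>A. A \<subseteq> C \<and> cs_consistent_wrt S C (\<Union>A) \<longrightarrow> \<Union>A \<in> C)"

definition cs_ne_inters_wrt :: "('a set \<Rightarrow> bool) \<Rightarrow> 'a set set \<Rightarrow> bool" where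
  "cs_ne_inters_wrt S C \<longleftrightarrow>
     (\<forall>A. A \<noteq> {} \<and> A \<subseteq> C \<and> cs_consistent_wrt S C (\<Union>A) \<longrightarrow> \<Inter>A \<in> C)"

definition cs_conflict_wrt :: "('a set \<Rightarrow> bool) \<Rightarrow> 'a set \<Rightarrow> 'a set set \<Rightarrow> bool" where
  "cs_conflict_wrt S E C \<longleftrightarrow>
     (\<forall>X. X \<subseteq> E \<and> (\<forall>Y. Y \<subseteq> X \<and> S Y \<longrightarrow> (\<exists>z\<in>C. Y \<subseteq> z \<and> z \<subseteq> X)) \<longrightarrow> X \<in> C)"

definition es_conflict_wrt :: "('a set \<Rightarrow> bool) \<Rightarrow> 'a set \<Rightarrow> ('a set \<Rightarrow> 'a set \<Rightarrow> bool) \<Rightarrow> bool" where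
  "es_conflict_wrt S E ent \<longleftrightarrow> (\<forall>X. X \<subseteq> E \<and> \<not> S X \<longrightarrow> ent {} X)"

lemma cs_consistent_wrt_top: "cs_consistent_wrt (\<lambda>_. True) C X \<longleftrightarrow> cs_consistent C X"
  unfolding cs_consistent_wrt_def cs_consistent_def by blast

lemma cs_props_wrt:
  "cs_bounded_unions E C \<longleftrightarrow> cs_unions_wrt (\<lambda>_. True) C"
  "cs_fc_unions E C \<longleftrightarrow> cs_unions_wrt finite C"
  "cs_pc_unions E C \<longleftrightarrow> cs_unions_wrt at_most_two C"
  "cs_bounded_ne_inters E C \<longleftrightarrow> cs_ne_inters_wrt (\<lambda>_. True) C"
  "cs_fc_ne_inters E C \<longleftrightarrow> cs_ne_inters_wrt finite C"
  "cs_pc_ne_inters E C \<longleftrightarrow> cs_ne_inters_wrt at_most_two C"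
  "cs_finite_conflict E C \<longleftrightarrow> cs_conflict_wrt finite E C"
  "cs_binary_conflict E C \<longleftrightarrow> cs_conflict_wrt at_most_two E C"
  by (simp_all only: cs_bounded_unions_def cs_fc_unions_def cs_pc_unions_def
      cs_bounded_ne_inters_def cs_fc_ne_inters_def cs_pc_ne_inters_def cs_finite_conflict_def
      cs_binary_conflict_def cs_unions_wrt_def cs_ne_inters_wrt_def cs_conflict_wrt_def
      cs_consistent_wrt_top cs_fin_consistent_def cs_pw_consistent_def cs_consistent_wrt_def
      at_most_two_def)

lemma es_props_wrt:
  "es_finite_conflict E ent \<longleftrightarrow> es_conflict_wrt finite E ent"
  "es_binary_conflict E ent \<longleftrightarrow> es_conflict_wrt at_most_two E ent"
  by (simp_all add: es_finite_conflict_def es_binary_conflict_def es_conflict_wrt_def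
      at_most_two_def not_le)

lemma es_conjunctiveD:
  "es_conjunctive E ent \<Longrightarrow> XS \<noteq> {} \<Longrightarrow> (\<And>X. X \<in> XS \<Longrightarrow> ent X Y) \<Longrightarrow> ent (\<Inter>XS) Y"
  unfolding es_conjunctive_def by blast

lemma es_locally_conjunctiveD:
  "es_locally_conjunctive E ent \<Longrightarrow> es_Con E ent (\<Union>XS \<union> Y) \<Longrightarrow> XS \<noteq> {}
    \<Longrightarrow> (\<And>X. X \<in> XS \<Longrightarrow> ent X Y) \<Longrightarrow> ent (\<Inter>XS) Y"
  unfolding es_locally_conjunctive_def by blast

lemma cs_ne_intersD: "cs_ne_inters E C \<Longrightarrow> A \<noteq> {} \<Longrightarrow> A \<subseteq> C \<Longrightarrow> \<Inter>A \<in> C"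
  unfolding cs_ne_inters_def by blast

lemma cs_ne_inters_wrtD:
  "cs_ne_inters_wrt S C \<Longrightarrow> A \<noteq> {} \<Longrightarrow> A \<subseteq> C \<Longrightarrow> cs_consistent_wrt S C (\<Union>A) \<Longrightarrow> \<Inter>A \<in> C"
  unfolding cs_ne_inters_wrt_def by blast

lemma cs_unions_wrtD: "cs_unions_wrt S C \<Longrightarrow> A \<subseteq> C \<Longrightarrow> cs_consistent_wrt S C (\<Union>A) \<Longrightarrow> \<Union>A \<in> C"
  unfolding cs_unions_wrt_def by blast

lemma es_conflict_wrt_top: "es_conflict_wrt (\<lambda>_. True) E ent"
  by (simp add: es_conflict_wrt_def)

lemma cs_conflict_wrt_top: "cs_conflict_wrt (\<lambda>_. True) E C"
  unfolding cs_conflict_wrt_def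
proof (intro allI impI)
  fix X assume "X \<subseteq> E \<and> (\<forall>Y. Y \<subseteq> X \<and> True \<longrightarrow> (\<exists>z\<in>C. Y \<subseteq> z \<and> z \<subseteq> X))"
  then obtain z where "z \<in> C" "X \<subseteq> z" "z \<subseteq> X" by blast
  then show "X \<in> C" by (simp add: subset_antisym)
qed

lemma es_conflict_wrt_mono:
  "es_conflict_wrt S E ent \<Longrightarrow> (\<And>Y. S Y \<Longrightarrow> S' Y) \<Longrightarrow> es_conflict_wrt S' E ent"
  unfolding es_conflict_wrt_def by blast

section \<open>Left-closed configurations\<close>

lemma left_closed_configsI:
  "X \<subseteq> E \<Longrightarrow> (\<And>Y. Y \<subseteq> X \<Longrightarrow> \<exists>Z\<subseteq>X. ent Z Y) \<Longrightarrow> X \<in> left_closed_configs E ent"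
  by (simp add: left_closed_configs_def)

lemma left_closed_configs_subset: "X \<in> left_closed_configs E ent \<Longrightarrow> X \<subseteq> E"
  by (simp add: left_closed_configs_def)

lemma left_closed_configs_enabled:
  "X \<in> left_closed_configs E ent \<Longrightarrow> Y \<subseteq> X \<Longrightarrow> \<exists>Z\<subseteq>X. ent Z Y"
  by (simp add: left_closed_configs_def)

lemma es_Con_if_left_closed:
  assumes X: "X \<in> left_closed_configs E ent"
  shows "es_Con E ent X"
  unfolding es_Con_def
proof (intro allI impI)
  fix Y assume "Y \<subseteq> X"
  then obtain Z where "Z \<subseteq> X" "ent Z Y" using left_closed_configs_enabled[OF X] by blast
  moreover have "X \<subseteq> E" using X by (rule left_closed_configs_subset)
  ultimately show "\<exists>Z\<subseteq>E. ent Z Y" by blast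
qed

lemma es_conflict_wrt_enabled:
  assumes "es_conflict_wrt S E ent" "Y \<subseteq> E" and tested: "S Y \<Longrightarrow> \<exists>Z\<subseteq>W. ent Z Y"
  shows "\<exists>Z\<subseteq>W. ent Z Y"
proof (cases "S Y")
  case False
  with assms(1,2) have "ent {} Y" unfolding es_conflict_wrt_def by blast
  then show ?thesis by blast
qed (rule tested)

lemma es_Con_if_consistent_wrt:
  assumes conflict: "es_conflict_wrt S E ent" and "X \<subseteq> E"
    and consistent: "cs_consistent_wrt S (left_closed_configs E ent) X"
  shows "es_Con E ent X"
  unfolding es_Con_def
proof (intro allI impI)
  fix Y assume "Y \<subseteq> X"
  with \<open>X \<subseteq> E\<close> have "Y \<subseteq> E" by (rule order_trans[rotated])
  with conflict show "\<exists>Z\<subseteq>E. ent Z Y"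
  proof (rule es_conflict_wrt_enabled)
    assume "S Y"
    with consistent \<open>Y \<subseteq> X\<close> obtain z where z: "z \<in> left_closed_configs E ent" "Y \<subseteq> z"
      unfolding cs_consistent_wrt_def cs_consistent_def by blast
    with es_Con_if_left_closed[OF z(1)] show "\<exists>Z\<subseteq>E. ent Z Y" unfolding es_Con_def by blast
  qed
qed

lemma left_closed_configs_rooted:
  "es_rooted E ent \<Longrightarrow> cs_rooted E (left_closed_configs E ent)"
  unfolding es_rooted_def cs_rooted_def by (rule left_closed_configsI) auto

lemma left_closed_configs_conflict_wrt:
  assumes conflict: "es_conflict_wrt S E ent"
  shows "cs_conflict_wrt S E (left_closed_configs E ent)"
  unfolding cs_conflict_wrt_def
proof (intro allI impI)
  fix X assume "X \<subseteq> E \<and>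
    (\<forall>Y. Y \<subseteq> X \<and> S Y \<longrightarrow> (\<exists>z\<in>left_closed_configs E ent. Y \<subseteq> z \<and> z \<subseteq> X))"
  then have "X \<subseteq> E"
    and covered: "\<And>Y. Y \<subseteq> X \<Longrightarrow> S Y \<Longrightarrow> \<exists>z\<in>left_closed_configs E ent. Y \<subseteq> z \<and> z \<subseteq> X"
    by auto
  show "X \<in> left_closed_configs E ent"
  proof (rule left_closed_configsI[OF \<open>X \<subseteq> E\<close>])
    fix Y assume "Y \<subseteq> X"
    with \<open>X \<subseteq> E\<close> have "Y \<subseteq> E" by (rule order_trans[rotated])
    with conflict show "\<exists>Z\<subseteq>X. ent Z Y"
    proof (rule es_conflict_wrt_enabled)
      assume "S Y"
      then obtain z where z: "z \<in> left_closed_configs E ent" "Y \<subseteq> z" "z \<subseteq> X"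
        using covered[OF \<open>Y \<subseteq> X\<close>] by blast
      obtain Z where "Z \<subseteq> z" "ent Z Y" using left_closed_configs_enabled[OF z(1,2)] by blast
      with z(3) show "\<exists>Z\<subseteq>X. ent Z Y" by blast
    qed
  qed
qed

text \<open>In a singular event structure an enabling of \<open>Y\<close> is either empty or enables a single
  event, which lies in one member of the family and can be enabled inside that member.\<close>

lemma left_closed_configs_unions_wrt:
  assumes singular: "es_singular E ent" and conflict: "es_conflict_wrt S E ent"
  shows "cs_unions_wrt S (left_closed_configs E ent)"
  unfolding cs_unions_wrt_def
proof (intro allI impI)
  fix A assume "A \<subseteq> left_closed_configs E ent \<and> cs_consistent_wrt S (left_closed_configs E ent) (\<Union>A)"
  then have A: "A \<subseteq> left_closed_configs E ent"
    and consistent: "cs_consistent_wrt S (left_closed_configs E ent) (\<Union>A)" by auto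
  have "\<Union>A \<subseteq> E" using A by (auto dest: left_closed_configs_subset)
  then show "\<Union>A \<in> left_closed_configs E ent"
  proof (rule left_closed_configsI)
    fix Y assume "Y \<subseteq> \<Union>A"
    with \<open>\<Union>A \<subseteq> E\<close> have "Y \<subseteq> E" by (rule order_trans[rotated])
    with conflict show "\<exists>Z\<subseteq>\<Union>A. ent Z Y"
    proof (rule es_conflict_wrt_enabled)
      assume "S Y"
      with consistent \<open>Y \<subseteq> \<Union>A\<close> obtain z where z: "z \<in> left_closed_configs E ent" "Y \<subseteq> z"
        unfolding cs_consistent_wrt_def cs_consistent_def by blast
      obtain Z where "ent Z Y" using left_closed_configs_enabled[OF z] by blast
      show "\<exists>Z\<subseteq>\<Union>A. ent Z Y"
      proof (cases "Z = {}")
        case False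
        with singular \<open>ent Z Y\<close> have "card Y = 1" unfolding es_singular_def by blast
        then obtain e where "Y = {e}" by (auto simp: card_1_singleton_iff)
        with \<open>Y \<subseteq> \<Union>A\<close> obtain a where "a \<in> A" "Y \<subseteq> a" by blast
        moreover from \<open>a \<in> A\<close> A have "a \<in> left_closed_configs E ent" by blast
        ultimately obtain Z' where "Z' \<subseteq> a" "ent Z' Y"
          using left_closed_configs_enabled by metis
        with \<open>a \<in> A\<close> show ?thesis by blast
      qed (use \<open>ent Z Y\<close> in blast)
    qed
  qed
qed

lemma left_closed_configs_enablings:
  assumes A: "A \<subseteq> left_closed_configs E ent" and Y: "Y \<subseteq> \<Inter>A"
  shows "\<exists>f. \<forall>a\<in>A. f a \<subseteq> a \<and> ent (f a) Y"
proof (rule bchoice, rule ballI)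
  fix a assume "a \<in> A"
  then have "a \<in> left_closed_configs E ent" "Y \<subseteq> a" using A Y by auto
  then show "\<exists>Z. Z \<subseteq> a \<and> ent Z Y" by (rule left_closed_configs_enabled)
qed

lemma left_closed_configs_ne_inters:
  assumes conj: "es_conjunctive E ent"
  shows "cs_ne_inters E (left_closed_configs E ent)"
  unfolding cs_ne_inters_def
proof (intro allI impI)
  fix A assume "A \<noteq> {} \<and> A \<subseteq> left_closed_configs E ent"
  then have "A \<noteq> {}" and A: "A \<subseteq> left_closed_configs E ent" by auto
  then have "\<Inter>A \<subseteq> E" by (auto dest: left_closed_configs_subset)
  then show "\<Inter>A \<in> left_closed_configs E ent"
  proof (rule left_closed_configsI)
    fix Y assume "Y \<subseteq> \<Inter>A"
    obtain f where f: "\<forall>a\<in>A. f a \<subseteq> a \<and> ent (f a) Y"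
      using left_closed_configs_enablings[OF A \<open>Y \<subseteq> \<Inter>A\<close>] ..
    have "ent (\<Inter>(f ` A)) Y"
      using conj by (rule es_conjunctiveD) (use \<open>A \<noteq> {}\<close> f in auto)
    moreover have "\<Inter>(f ` A) \<subseteq> \<Inter>A" using f by blast
    ultimately show "\<exists>Z\<subseteq>\<Inter>A. ent Z Y" by blast
  qed
qed

lemma left_closed_configs_ne_inters_wrt:
  assumes lconj: "es_locally_conjunctive E ent" and conflict: "es_conflict_wrt S E ent"
  shows "cs_ne_inters_wrt S (left_closed_configs E ent)"
  unfolding cs_ne_inters_wrt_def
proof (intro allI impI)
  fix A assume "A \<noteq> {} \<and> A \<subseteq> left_closed_configs E ent
    \<and> cs_consistent_wrt S (left_closed_configs E ent) (\<Union>A)"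
  then have "A \<noteq> {}" and A: "A \<subseteq> left_closed_configs E ent"
    and consistent: "cs_consistent_wrt S (left_closed_configs E ent) (\<Union>A)" by auto
  have "\<Union>A \<subseteq> E" using A by (auto dest: left_closed_configs_subset)
  with conflict have Con: "es_Con E ent (\<Union>A)" using consistent by (rule es_Con_if_consistent_wrt)
  have "\<Inter>A \<subseteq> E" using \<open>A \<noteq> {}\<close> \<open>\<Union>A \<subseteq> E\<close> by blast
  then show "\<Inter>A \<in> left_closed_configs E ent"
  proof (rule left_closed_configsI)
    fix Y assume "Y \<subseteq> \<Inter>A"
    obtain f where f: "\<forall>a\<in>A. f a \<subseteq> a \<and> ent (f a) Y"
      using left_closed_configs_enablings[OF A \<open>Y \<subseteq> \<Inter>A\<close>] ..
    have "\<Union>(f ` A) \<union> Y \<subseteq> \<Union>A" using f \<open>Y \<subseteq> \<Inter>A\<close> \<open>A \<noteq> {}\<close> by blast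
    with Con have "es_Con E ent (\<Union>(f ` A) \<union> Y)"
      unfolding es_Con_def by (meson order_trans)
    with lconj have "ent (\<Inter>(f ` A)) Y"
      by (rule es_locally_conjunctiveD) (use \<open>A \<noteq> {}\<close> f in auto)
    moreover have "\<Inter>(f ` A) \<subseteq> \<Inter>A" using f by blast
    ultimately show "\<exists>Z\<subseteq>\<Inter>A. ent Z Y" by blast
  qed
qed

lemma cholds_left_closed_configs:
  assumes "\<forall>q\<in>translate p. eholds q E ent"
  shows "cholds p E (left_closed_configs E ent)"
  using assms
  by (cases p) (simp_all add: cs_props_wrt es_props_wrt es_conflict_wrt_top
      left_closed_configs_rooted left_closed_configs_unions_wrt left_closed_configs_ne_inters
      left_closed_configs_ne_inters_wrt left_closed_configs_conflict_wrt)

section \<open>Event structures of configuration structures\<close>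

text \<open>Enabling the untested sets by \<open>{}\<close> is harmless: by the conflict property of \<open>C\<close>,
  membership in \<open>C\<close> never depends on them.\<close>

definition es_of_cs :: "('a set \<Rightarrow> bool) \<Rightarrow> 'a set \<Rightarrow> 'a set set \<Rightarrow> 'a set \<Rightarrow> 'a set \<Rightarrow> bool" where
  "es_of_cs S E C Z Y \<longleftrightarrow> Z \<inter> Y = {} \<and> (Z \<union> Y \<in> C \<or> (Z = {} \<and> Y \<subseteq> E \<and> \<not> S Y))"

lemma event_structure_es_of_cs: "config_structure E C \<Longrightarrow> event_structure E (es_of_cs S E C)"
  unfolding config_structure_def event_structure_def es_of_cs_def by blast

lemma es_pure_es_of_cs: "es_pure E (es_of_cs S E C)"
  unfolding es_pure_def es_of_cs_def by blast

lemma es_rooted_es_of_cs: "{} \<in> C \<Longrightarrow> es_rooted E (es_of_cs S E C)"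
  by (simp add: es_rooted_def es_of_cs_def)

lemma es_conflict_wrt_es_of_cs: "es_conflict_wrt S E (es_of_cs S E C)"
  unfolding es_conflict_wrt_def es_of_cs_def by blast

lemma left_closed_configs_es_of_cs:
  assumes cs: "config_structure E C" and conflict: "cs_conflict_wrt S E C"
  shows "left_closed_configs E (es_of_cs S E C) = C"
proof (intro equalityI subsetI)
  fix X assume X: "X \<in> left_closed_configs E (es_of_cs S E C)"
  have "\<exists>z\<in>C. Y \<subseteq> z \<and> z \<subseteq> X" if "Y \<subseteq> X" "S Y" for Y
  proof -
    obtain Z where "Z \<subseteq> X" "es_of_cs S E C Z Y"
      using left_closed_configs_enabled[OF X \<open>Y \<subseteq> X\<close>] by blast
    with \<open>S Y\<close> have "Z \<union> Y \<in> C" unfolding es_of_cs_def by blast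
    with \<open>Z \<subseteq> X\<close> \<open>Y \<subseteq> X\<close> show ?thesis by blast
  qed
  moreover have "X \<subseteq> E" using X by (rule left_closed_configs_subset)
  ultimately show "X \<in> C" using conflict unfolding cs_conflict_wrt_def by auto
next
  fix X assume "X \<in> C"
  with cs have "X \<subseteq> E" unfolding config_structure_def by blast
  then show "X \<in> left_closed_configs E (es_of_cs S E C)"
  proof (rule left_closed_configsI)
    fix Y assume "Y \<subseteq> X"
    then have "es_of_cs S E C (X - Y) Y" using \<open>X \<in> C\<close> by (auto simp: es_of_cs_def Un_absorb2)
    then show "\<exists>Z\<subseteq>X. es_of_cs S E C Z Y" by blast
  qed
qed

lemma es_Con_es_of_cs:
  assumes "es_Con E (es_of_cs S E C) X"
  shows "cs_consistent_wrt S C X"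
  unfolding cs_consistent_wrt_def
proof (intro allI impI)
  fix Y assume "Y \<subseteq> X \<and> S Y"
  then obtain Z where "es_of_cs S E C Z Y" using assms unfolding es_Con_def by blast
  with \<open>Y \<subseteq> X \<and> S Y\<close> have "Z \<union> Y \<in> C" unfolding es_of_cs_def by blast
  then show "cs_consistent C Y" unfolding cs_consistent_def by blast
qed

lemma Inter_image_Un: "XS \<noteq> {} \<Longrightarrow> \<Inter>((\<lambda>X. X \<union> Y) ` XS) = \<Inter>XS \<union> Y"
  by blast

lemma es_of_cs_Inter:
  assumes "XS \<noteq> {}" and enabled: "\<And>X. X \<in> XS \<Longrightarrow> es_of_cs S E C X Y"
    and closed: "(\<lambda>X. X \<union> Y) ` XS \<subseteq> C \<Longrightarrow> \<Inter>((\<lambda>X. X \<union> Y) ` XS) \<in> C"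
  shows "es_of_cs S E C (\<Inter>XS) Y"
proof (cases "\<forall>X\<in>XS. X \<union> Y \<in> C")
  case True
  then have "\<Inter>XS \<union> Y \<in> C" using closed Inter_image_Un[OF \<open>XS \<noteq> {}\<close>] by auto
  moreover have "\<Inter>XS \<inter> Y = {}" using enabled \<open>XS \<noteq> {}\<close> unfolding es_of_cs_def by blast
  ultimately show ?thesis unfolding es_of_cs_def by blast
next
  case False
  then obtain X where "X \<in> XS" "X \<union> Y \<notin> C" by blast
  with enabled have "X = {}" "Y \<subseteq> E" "\<not> S Y" unfolding es_of_cs_def by blast+
  with \<open>X \<in> XS\<close> have "\<Inter>XS = {}" by blast
  with \<open>Y \<subseteq> E\<close> \<open>\<not> S Y\<close> show ?thesis unfolding es_of_cs_def by blast
qed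

lemma es_conjunctive_es_of_cs:
  assumes closed: "cs_ne_inters E C"
  shows "es_conjunctive E (es_of_cs S E C)"
  unfolding es_conjunctive_def
proof (intro allI impI)
  fix XS Y assume "XS \<noteq> {} \<and> (\<forall>X\<in>XS. es_of_cs S E C X Y)"
  then have "XS \<noteq> {}" "\<And>X. X \<in> XS \<Longrightarrow> es_of_cs S E C X Y" by auto
  then show "es_of_cs S E C (\<Inter>XS) Y"
  proof (rule es_of_cs_Inter)
    assume "(\<lambda>X. X \<union> Y) ` XS \<subseteq> C"
    moreover have "(\<lambda>X. X \<union> Y) ` XS \<noteq> {}" using \<open>XS \<noteq> {}\<close> by blast
    ultimately show "\<Inter>((\<lambda>X. X \<union> Y) ` XS) \<in> C" by (intro cs_ne_intersD[OF closed])
  qed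
qed

lemma es_locally_conjunctive_es_of_cs:
  assumes closed: "cs_ne_inters_wrt S C"
  shows "es_locally_conjunctive E (es_of_cs S E C)"
  unfolding es_locally_conjunctive_def
proof (intro allI impI)
  fix XS Y
  assume "XS \<noteq> {} \<and> (\<forall>X\<in>XS. es_of_cs S E C X Y) \<and> es_Con E (es_of_cs S E C) (\<Union>XS \<union> Y)"
  then have "XS \<noteq> {}" "\<And>X. X \<in> XS \<Longrightarrow> es_of_cs S E C X Y"
    and Con: "es_Con E (es_of_cs S E C) (\<Union>XS \<union> Y)" by auto
  from this(1,2) show "es_of_cs S E C (\<Inter>XS) Y"
  proof (rule es_of_cs_Inter)
    assume "(\<lambda>X. X \<union> Y) ` XS \<subseteq> C"
    moreover have "\<Union>((\<lambda>X. X \<union> Y) ` XS) = \<Union>XS \<union> Y" using \<open>XS \<noteq> {}\<close> by blast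
    with Con have "cs_consistent_wrt S C (\<Union>((\<lambda>X. X \<union> Y) ` XS))"
      by (simp add: es_Con_es_of_cs)
    moreover have "(\<lambda>X. X \<union> Y) ` XS \<noteq> {}" using \<open>XS \<noteq> {}\<close> by blast
    ultimately show "\<Inter>((\<lambda>X. X \<union> Y) ` XS) \<in> C" by (intro cs_ne_inters_wrtD[OF closed])
  qed
qed

definition singular_es_of_cs ::
  "('a set \<Rightarrow> bool) \<Rightarrow> 'a set \<Rightarrow> 'a set set \<Rightarrow> 'a set \<Rightarrow> 'a set \<Rightarrow> bool" where
  "singular_es_of_cs S E C Z Y \<longleftrightarrow>
     (\<exists>e. Y = {e} \<and> e \<notin> Z \<and> insert e Z \<in> C)
     \<or> (Z = {} \<and> card Y \<noteq> 1 \<and> Y \<subseteq> E \<and> (cs_consistent C Y \<or> \<not> S Y))"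

lemma singular_es_of_cs_singleton:
  "singular_es_of_cs S E C Z {e} \<longleftrightarrow> e \<notin> Z \<and> insert e Z \<in> C"
  unfolding singular_es_of_cs_def by auto

lemma singular_es_of_cs_non_singleton:
  "card Y \<noteq> 1 \<Longrightarrow>
    singular_es_of_cs S E C Z Y \<longleftrightarrow> Z = {} \<and> Y \<subseteq> E \<and> (cs_consistent C Y \<or> \<not> S Y)"
  unfolding singular_es_of_cs_def by auto

lemma event_structure_singular_es_of_cs:
  "config_structure E C \<Longrightarrow> event_structure E (singular_es_of_cs S E C)"
  unfolding config_structure_def event_structure_def singular_es_of_cs_def by blast

lemma es_pure_singular_es_of_cs: "es_pure E (singular_es_of_cs S E C)"
  unfolding es_pure_def singular_es_of_cs_def by blast

lemma es_singular_singular_es_of_cs: "es_singular E (singular_es_of_cs S E C)"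
  unfolding es_singular_def singular_es_of_cs_def by auto

lemma es_rooted_singular_es_of_cs: "{} \<in> C \<Longrightarrow> es_rooted E (singular_es_of_cs S E C)"
  by (auto simp: es_rooted_def singular_es_of_cs_non_singleton cs_consistent_def)

lemma es_conflict_wrt_singular_es_of_cs:
  assumes "\<And>e. S {e}"
  shows "es_conflict_wrt S E (singular_es_of_cs S E C)"
  unfolding es_conflict_wrt_def
proof (intro allI impI)
  fix X assume "X \<subseteq> E \<and> \<not> S X"
  moreover from this assms have "card X \<noteq> 1" by (auto simp: card_1_singleton_iff)
  ultimately show "singular_es_of_cs S E C {} X" by (simp add: singular_es_of_cs_non_singleton)
qed

lemma es_Con_singular_es_of_cs:
  assumes "es_Con E (singular_es_of_cs S E C) X"
  shows "cs_consistent_wrt S C X"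
  unfolding cs_consistent_wrt_def
proof (intro allI impI)
  fix Y assume "Y \<subseteq> X \<and> S Y"
  then obtain Z where Z: "singular_es_of_cs S E C Z Y" using assms unfolding es_Con_def by blast
  show "cs_consistent C Y"
  proof (cases "card Y = 1")
    case True
    then obtain e where "Y = {e}" by (auto simp: card_1_singleton_iff)
    with Z have "insert e Z \<in> C" by (simp add: singular_es_of_cs_singleton)
    with \<open>Y = {e}\<close> show ?thesis unfolding cs_consistent_def by blast
  next
    case False
    with Z \<open>Y \<subseteq> X \<and> S Y\<close> show ?thesis by (simp add: singular_es_of_cs_non_singleton)
  qed
qed

lemma left_closed_configs_singular_es_of_cs:
  assumes cs: "config_structure E C" and closed: "cs_unions_wrt S C"
  shows "left_closed_configs E (singular_es_of_cs S E C) = C"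
proof (intro equalityI subsetI)
  fix X assume X: "X \<in> left_closed_configs E (singular_es_of_cs S E C)"
  define A where "A = {z \<in> C. z \<subseteq> X}"
  have "X \<subseteq> \<Union>A"
  proof
    fix e assume "e \<in> X"
    then obtain Z where "Z \<subseteq> X" "singular_es_of_cs S E C Z {e}"
      using left_closed_configs_enabled[OF X, of "{e}"] by blast
    then have "insert e Z \<in> A" using \<open>e \<in> X\<close> by (simp add: A_def singular_es_of_cs_singleton)
    then show "e \<in> \<Union>A" by blast
  qed
  then have "\<Union>A = X" unfolding A_def by blast
  moreover have "cs_consistent_wrt S C X"
    using X by (intro es_Con_singular_es_of_cs es_Con_if_left_closed)
  moreover have "A \<subseteq> C" unfolding A_def by blast
  ultimately show "X \<in> C" using cs_unions_wrtD[OF closed, of A] by simp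
next
  fix X assume "X \<in> C"
  with cs have "X \<subseteq> E" unfolding config_structure_def by blast
  then show "X \<in> left_closed_configs E (singular_es_of_cs S E C)"
  proof (rule left_closed_configsI)
    fix Y assume "Y \<subseteq> X"
    show "\<exists>Z\<subseteq>X. singular_es_of_cs S E C Z Y"
    proof (cases "card Y = 1")
      case True
      then obtain e where "Y = {e}" by (auto simp: card_1_singleton_iff)
      with \<open>Y \<subseteq> X\<close> \<open>X \<in> C\<close> have "singular_es_of_cs S E C (X - {e}) Y"
        by (simp add: singular_es_of_cs_singleton insert_absorb)
      then show ?thesis by blast
    next
      case False
      with \<open>Y \<subseteq> X\<close> \<open>X \<in> C\<close> \<open>X \<subseteq> E\<close> have "singular_es_of_cs S E C {} Y"
        by (auto simp: singular_es_of_cs_non_singleton cs_consistent_def)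
      then show ?thesis by blast
    qed
  qed
qed

lemma singular_es_of_cs_Inter:
  assumes "XS \<noteq> {}" and enabled: "\<And>X. X \<in> XS \<Longrightarrow> singular_es_of_cs S E C X Y"
    and closed: "\<And>e. Y = {e} \<Longrightarrow> insert e ` XS \<subseteq> C \<Longrightarrow> \<Inter>(insert e ` XS) \<in> C"
  shows "singular_es_of_cs S E C (\<Inter>XS) Y"
proof (cases "card Y = 1")
  case True
  then obtain e where "Y = {e}" by (auto simp: card_1_singleton_iff)
  with enabled have "\<And>X. X \<in> XS \<Longrightarrow> e \<notin> X \<and> insert e X \<in> C"
    by (simp add: singular_es_of_cs_singleton)
  moreover from this closed[OF \<open>Y = {e}\<close>] have "\<Inter>(insert e ` XS) \<in> C" by blast
  moreover have "\<Inter>(insert e ` XS) = insert e (\<Inter>XS)" using \<open>XS \<noteq> {}\<close> by blast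
  ultimately show ?thesis using \<open>XS \<noteq> {}\<close> \<open>Y = {e}\<close> by (auto simp: singular_es_of_cs_singleton)
next
  case False
  with enabled have "\<And>X. X \<in> XS \<Longrightarrow> X = {} \<and> Y \<subseteq> E \<and> (cs_consistent C Y \<or> \<not> S Y)"
    by (simp add: singular_es_of_cs_non_singleton)
  with \<open>XS \<noteq> {}\<close> False show ?thesis by (auto simp: singular_es_of_cs_non_singleton)
qed

lemma es_conjunctive_singular_es_of_cs:
  assumes closed: "cs_ne_inters E C"
  shows "es_conjunctive E (singular_es_of_cs S E C)"
  unfolding es_conjunctive_def
proof (intro allI impI)
  fix XS Y assume "XS \<noteq> {} \<and> (\<forall>X\<in>XS. singular_es_of_cs S E C X Y)"
  then have "XS \<noteq> {}" "\<And>X. X \<in> XS \<Longrightarrow> singular_es_of_cs S E C X Y" by auto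
  then show "singular_es_of_cs S E C (\<Inter>XS) Y"
  proof (rule singular_es_of_cs_Inter)
    fix e assume "insert e ` XS \<subseteq> C"
    moreover have "insert e ` XS \<noteq> {}" using \<open>XS \<noteq> {}\<close> by blast
    ultimately show "\<Inter>(insert e ` XS) \<in> C" by (intro cs_ne_intersD[OF closed])
  qed
qed

lemma es_locally_conjunctive_singular_es_of_cs:
  assumes closed: "cs_ne_inters_wrt S C"
  shows "es_locally_conjunctive E (singular_es_of_cs S E C)"
  unfolding es_locally_conjunctive_def
proof (intro allI impI)
  fix XS Y assume "XS \<noteq> {} \<and> (\<forall>X\<in>XS. singular_es_of_cs S E C X Y)
    \<and> es_Con E (singular_es_of_cs S E C) (\<Union>XS \<union> Y)"
  then have "XS \<noteq> {}" "\<And>X. X \<in> XS \<Longrightarrow> singular_es_of_cs S E C X Y"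
    and Con: "es_Con E (singular_es_of_cs S E C) (\<Union>XS \<union> Y)" by auto
  from this(1,2) show "singular_es_of_cs S E C (\<Inter>XS) Y"
  proof (rule singular_es_of_cs_Inter)
    fix e assume "Y = {e}" "insert e ` XS \<subseteq> C"
    have "\<Union>(insert e ` XS) = \<Union>XS \<union> Y" using \<open>XS \<noteq> {}\<close> \<open>Y = {e}\<close> by blast
    with Con have "cs_consistent_wrt S C (\<Union>(insert e ` XS))"
      by (simp add: es_Con_singular_es_of_cs)
    moreover have "insert e ` XS \<noteq> {}" using \<open>XS \<noteq> {}\<close> by blast
    ultimately show "\<Inter>(insert e ` XS) \<in> C"
      using \<open>insert e ` XS \<subseteq> C\<close> by (intro cs_ne_inters_wrtD[OF closed])
  qed
qed

section \<open>Packages\<close>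

text \<open>The sets whose consistency the strongest conflict property in \<open>P\<close> requires to be checked.\<close>

definition tested_sets :: "cprop set \<Rightarrow> 'a set \<Rightarrow> bool" where
  "tested_sets P = (if CBinaryConflict \<in> P then at_most_two
     else if CFiniteConflict \<in> P then finite else (\<lambda>_. True))"

lemma tested_sets_singleton: "tested_sets P {e}"
  by (simp add: tested_sets_def at_most_two_def)

lemma es_finite_conflict_if_tested:
  "es_conflict_wrt (tested_sets P) E ent \<Longrightarrow> CFiniteConflict \<in> P \<Longrightarrow> es_finite_conflict E ent"
  unfolding es_props_wrt
  by (erule es_conflict_wrt_mono) (auto simp: tested_sets_def at_most_two_def split: if_splits)

lemma es_binary_conflict_if_tested:
  "es_conflict_wrt (tested_sets P) E ent \<Longrightarrow> CBinaryConflict \<in> P \<Longrightarrow> es_binary_conflict E ent"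
  by (simp add: es_props_wrt tested_sets_def)

lemma cs_conflict_wrt_tested_sets:
  assumes "\<forall>p\<in>P. cholds p E C"
  shows "cs_conflict_wrt (tested_sets P) E C"
proof -
  from assms have "CBinaryConflict \<in> P \<Longrightarrow> cs_binary_conflict E C"
    and "CFiniteConflict \<in> P \<Longrightarrow> cs_finite_conflict E C"
    by (metis cholds.simps)+
  then show ?thesis by (simp add: tested_sets_def cs_props_wrt cs_conflict_wrt_top)
qed

lemma cs_unions_wrt_tested_sets:
  assumes "package P" and holds: "\<forall>p\<in>P. cholds p E C" and "BoundedUnions \<in> P"
  shows "cs_unions_wrt (tested_sets P) C"
proof -
  from assms(1,3) have "CBinaryConflict \<in> P \<Longrightarrow> PCUnions \<in> P" "CFiniteConflict \<in> P \<Longrightarrow> FCUnions \<in> P"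
    unfolding package_def by auto
  with holds assms(3) have "cs_bounded_unions E C"
    and "CBinaryConflict \<in> P \<Longrightarrow> cs_pc_unions E C" "CFiniteConflict \<in> P \<Longrightarrow> cs_fc_unions E C"
    by (metis cholds.simps)+
  then show ?thesis by (simp add: tested_sets_def cs_props_wrt)
qed

lemma cs_ne_inters_wrt_tested_sets:
  assumes "package P" and holds: "\<forall>p\<in>P. cholds p E C" and "BoundedNEInters \<in> P"
  shows "cs_ne_inters_wrt (tested_sets P) C"
proof -
  from assms(1,3) have "CBinaryConflict \<in> P \<Longrightarrow> PCNEInters \<in> P" "CFiniteConflict \<in> P \<Longrightarrow> FCNEInters \<in> P"
    unfolding package_def by auto
  with holds assms(3) have "cs_bounded_ne_inters E C"
    and "CBinaryConflict \<in> P \<Longrightarrow> cs_pc_ne_inters E C" "CFiniteConflict \<in> P \<Longrightarrow> cs_fc_ne_inters E C"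
    by (metis cholds.simps)+
  then show ?thesis by (simp add: tested_sets_def cs_props_wrt)
qed

fun eprop_origin :: "eprop \<Rightarrow> cprop" where
  "eprop_origin ERooted = CRooted"
| "eprop_origin Singular = BoundedUnions"
| "eprop_origin Conjunctive = NEInters"
| "eprop_origin LocallyConjunctive = BoundedNEInters"
| "eprop_origin EFiniteConflict = CFiniteConflict"
| "eprop_origin EBinaryConflict = CBinaryConflict"

lemma eprop_origin_in_package:
  assumes "package P" "q \<in> translate_set P"
  shows "eprop_origin q \<in> P"
proof -
  obtain p where "p \<in> P" "q \<in> translate p" using assms(2) unfolding translate_set_def by blast
  with assms(1) show ?thesis by (cases p) (auto simp: package_def)
qed

lemma eholds_es_of_cs:
  assumes "package P" "\<forall>p\<in>P. cholds p E C" "eprop_origin q \<in> P" "q \<noteq> Singular"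
  shows "eholds q E (es_of_cs (tested_sets P) E C)"
  using assms es_conflict_wrt_es_of_cs[of "tested_sets P" E C]
  by (cases q) (auto simp: cs_rooted_def es_rooted_es_of_cs es_conjunctive_es_of_cs
      es_locally_conjunctive_es_of_cs cs_ne_inters_wrt_tested_sets
      intro: es_finite_conflict_if_tested es_binary_conflict_if_tested)

lemma eholds_singular_es_of_cs:
  assumes "package P" "\<forall>p\<in>P. cholds p E C" "eprop_origin q \<in> P"
  shows "eholds q E (singular_es_of_cs (tested_sets P) E C)"
  using assms es_conflict_wrt_singular_es_of_cs[of "tested_sets P" E C, OF tested_sets_singleton]
  by (cases q) (auto simp: cs_rooted_def es_rooted_singular_es_of_cs es_singular_singular_es_of_cs
      es_conjunctive_singular_es_of_cs es_locally_conjunctive_singular_es_of_cs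
      cs_ne_inters_wrt_tested_sets intro: es_finite_conflict_if_tested es_binary_conflict_if_tested)

lemma pure_event_structure_representation:
  assumes cs: "config_structure E C" and package: "package P" and holds: "\<forall>p\<in>P. cholds p E C"
  shows "\<exists>ent. event_structure E ent \<and> es_pure E ent \<and> (\<forall>q\<in>translate_set P. eholds q E ent)
    \<and> left_closed_configs E ent = C"
proof (cases "BoundedUnions \<in> P")
  case True
  let ?ent = "singular_es_of_cs (tested_sets P) E C"
  have "left_closed_configs E ?ent = C"
    using cs cs_unions_wrt_tested_sets[OF package holds True] by (rule left_closed_configs_singular_es_of_cs)
  moreover have "\<forall>q\<in>translate_set P. eholds q E ?ent"
    using eholds_singular_es_of_cs[OF package holds] eprop_origin_in_package[OF package] by blast
  ultimately show ?thesis
    using event_structure_singular_es_of_cs[OF cs] es_pure_singular_es_of_cs by (intro exI[of _ ?ent]) simp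
next
  case False
  let ?ent = "es_of_cs (tested_sets P) E C"
  have "left_closed_configs E ?ent = C"
    using cs cs_conflict_wrt_tested_sets[OF holds] by (rule left_closed_configs_es_of_cs)
  moreover have "\<forall>q\<in>translate_set P. eholds q E ?ent"
  proof
    fix q assume "q \<in> translate_set P"
    with package have "eprop_origin q \<in> P" by (rule eprop_origin_in_package)
    moreover from this False have "q \<noteq> Singular" by auto
    ultimately show "eholds q E ?ent" by (rule eholds_es_of_cs[OF package holds])
  qed
  ultimately show ?thesis
    using event_structure_es_of_cs[OF cs] es_pure_es_of_cs by (intro exI[of _ ?ent]) simp
qed

theorem mainTheorem12:
  fixes E :: "'a set" and C :: "'a set set" and P :: "cprop set"
  assumes "config_structure E C"
    and "package P"
  shows "((\<forall>p\<in>P. cholds p E C) \<longleftrightarrow>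
           (\<exists>ent. event_structure E ent \<and> (\<forall>q\<in>translate_set P. eholds q E ent)
                  \<and> left_closed_configs E ent = C))
       \<and> ((\<forall>p\<in>P. cholds p E C) \<longrightarrow>
           (\<exists>ent. event_structure E ent \<and> es_pure E ent
                  \<and> (\<forall>q\<in>translate_set P. eholds q E ent)
                  \<and> left_closed_configs E ent = C))"
proof -
  have sound: "\<forall>p\<in>P. cholds p E C"
    if "\<forall>q\<in>translate_set P. eholds q E ent" "left_closed_configs E ent = C" for ent
  proof
    fix p assume "p \<in> P"
    with that(1) have "\<forall>q\<in>translate p. eholds q E ent" unfolding translate_set_def by blast
    then have "cholds p E (left_closed_configs E ent)" by (rule cholds_left_closed_configs)
    with that(2) show "cholds p E C" by simp
  qed
  show ?thesis
  proof (intro conjI iffI impI)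
    assume "\<forall>p\<in>P. cholds p E C"
    then show "\<exists>ent. event_structure E ent \<and> es_pure E ent
        \<and> (\<forall>q\<in>translate_set P. eholds q E ent) \<and> left_closed_configs E ent = C"
      by (rule pure_event_structure_representation[OF assms])
    then show "\<exists>ent. event_structure E ent \<and> (\<forall>q\<in>translate_set P. eholds q E ent)
        \<and> left_closed_configs E ent = C" by blast
  next
    assume "\<exists>ent. event_structure E ent \<and> (\<forall>q\<in>translate_set P. eholds q E ent)
      \<and> left_closed_configs E ent = C"
    then show "\<forall>p\<in>P. cholds p E C" using sound by blast
  qed
qed

end
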